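(* There is an absolute constant $C$ such that the following holds. Let $x,z\in\mathbb{R}^3$ with $r=|x-z|>0$, and choose Cartesian coordinates in which $x=(-r/2,0,0)$ and $z=(r/2,0,0)$. For $y\in\mathbb{R}^3$ let $\rho=|x-y|+|y-z|$ and let $\theta\in(0,\pi)$, $\phi\in[0,2\pi)$ be the elliptical coordinates of $y$ defined by $$y_1=\tfrac{\rho}{2}\cos\theta,\quad y_2=\tfrac{\sqrt{\rho^2-r^2}}{2}\sin\theta\cos\phi,\quad y_3=\tfrac{\sqrt{\rho^2-r^2}}{2}\sin\theta\sin\phi.$$ Then for every $f\in\mathcal K_2$, $$\int_{\{y:\ \rho\le 2r\}}\frac{|f(y)|\,dy}{r\sqrt{\rho^2-r^2}\,\sin\theta}\le C\|f\|_{\mathcal K_2}.$$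
   Context: $\mathcal K_2$ is the space of functions on $\mathbb{R}^3$ with $\|f\|_{\mathcal K_2}=\sup_{w\in\mathbb{R}^3}\int_{\mathbb{R}^3}\frac{|f(y)|}{|y-w|^2}dy<\infty$. *)

theory Defs
  imports "HOL-Analysis.Analysis"
begin

definition K2_norm :: "(real^3 \<Rightarrow> real) \<Rightarrow> ennreal" where
  "K2_norm f = (SUP w. \<integral>\<^sup>+ y. ennreal (\<bar>f y\<bar> / (norm (y - w))\<^sup>2) \<partial>lborel)"

definition K2 :: "(real^3 \<Rightarrow> real) set" where
  "K2 = {f. f \<in> borel_measurable lborel \<and> K2_norm f < \<infinity>}"

definition focus_x :: "real \<Rightarrow> real^3" where
  "focus_x r = vector [- r / 2, 0, 0]"
definition focus_z :: "real \<Rightarrow> real^3" where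
  "focus_z r = vector [r / 2, 0, 0]"

definition ell_rho :: "real \<Rightarrow> real^3 \<Rightarrow> real" where
  "ell_rho r y = dist (focus_x r) y + dist y (focus_z r)"
definition ell_theta :: "real \<Rightarrow> real^3 \<Rightarrow> real" where
  "ell_theta r y = arccos (2 * y $ 1 / ell_rho r y)"

end

theory Submission
  imports Defs
begin

text \<open>
  The weight \<open>\<surd>(\<rho>\<^sup>2 - r\<^sup>2) sin \<theta>\<close> equals \<open>2 d(y)\<close>, where \<open>d(y)\<close> is the distance of \<open>y\<close> from the
  axis through the two foci. On the region \<open>\<rho> \<le> 2r\<close> we have \<open>|y\<^sub>1| \<le> r\<close> and \<open>d(y) \<le> r\<close>, and
  \<open>1 / d(y)\<close> is bounded by the integral of \<open>|y - t e\<^sub>1|\<^sup>-\<^sup>2\<close> over \<open>t \<in> [-2r, 2r]\<close>, since each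
  \<open>t\<close> with \<open>|t - y\<^sub>1| \<le> d(y)\<close> contributes at least \<open>1 / (2 d(y)\<^sup>2)\<close>. Exchanging the order of
  integration, every \<open>t\<close> contributes at most \<open>\<parallel>f\<parallel>\<^sub>K\<^sub>2\<close>, which gives the bound with \<open>C = 2\<close>.
\<close>

definition axis_dist :: "real^3 \<Rightarrow> real" where
  "axis_dist y = sqrt ((y$2)\<^sup>2 + (y$3)\<^sup>2)"

lemma axis_dist_nonneg: "0 \<le> axis_dist y"
  by (simp add: axis_dist_def)

lemma norm_vec3_power2: "(norm (v::real^3))\<^sup>2 = (v$1)\<^sup>2 + (v$2)\<^sup>2 + (v$3)\<^sup>2"
proof -
  have "(norm v)\<^sup>2 = inner v v"
    by (simp add: power2_norm_eq_inner)
  then show ?thesis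
    by (simp add: inner_vec_def sum_3 power2_eq_square)
qed

lemma norm_diff_axis_power2:
  "(norm (y - t *\<^sub>R axis 1 1))\<^sup>2 = (y$1 - t)\<^sup>2 + (axis_dist y)\<^sup>2"
  by (simp add: norm_vec3_power2 axis_dist_def axis_def)

lemma focus_x_eq_axis: "focus_x r = (- r / 2) *\<^sub>R axis 1 1"
  and focus_z_eq_axis: "focus_z r = (r / 2) *\<^sub>R axis 1 1"
  by (auto simp: focus_x_def focus_z_def vec_eq_iff forall_3 axis_def)

lemma dist_focus_x_power2: "(dist (focus_x r) y)\<^sup>2 = (y$1 + r / 2)\<^sup>2 + (axis_dist y)\<^sup>2"
  by (subst dist_commute) (simp only: dist_norm focus_x_eq_axis norm_diff_axis_power2, simp)

lemma dist_focus_z_power2: "(dist y (focus_z r))\<^sup>2 = (y$1 - r / 2)\<^sup>2 + (axis_dist y)\<^sup>2"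
  unfolding dist_norm focus_z_eq_axis norm_diff_axis_power2 ..

lemma ell_rho_lower_bounds:
  shows "\<bar>r\<bar> \<le> ell_rho r y" and "\<bar>2 * y$1\<bar> \<le> ell_rho r y" and "2 * axis_dist y \<le> ell_rho r y"
proof -
  have le_of_power2: "\<bar>a\<bar> \<le> b \<and> \<bar>c\<bar> \<le> b" if "b\<^sup>2 = a\<^sup>2 + c\<^sup>2" "0 \<le> b" for a b c :: real
    using power2_le_imp_le[of "\<bar>a\<bar>" b] power2_le_imp_le[of "\<bar>c\<bar>" b] that by simp
  note x = le_of_power2[OF dist_focus_x_power2[of r y] zero_le_dist]
  note z = le_of_power2[OF dist_focus_z_power2[of y r] zero_le_dist]
  show "\<bar>r\<bar> \<le> ell_rho r y" "\<bar>2 * y$1\<bar> \<le> ell_rho r y" "2 * axis_dist y \<le> ell_rho r y"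
    using x z unfolding ell_rho_def by linarith+
qed

lemma confocal_identity:
  fixes A B r a d :: real
  assumes "A\<^sup>2 = (a + r / 2)\<^sup>2 + d\<^sup>2" and "B\<^sup>2 = (a - r / 2)\<^sup>2 + d\<^sup>2"
  shows "((A + B)\<^sup>2 - r\<^sup>2) * ((A + B)\<^sup>2 - (2 * a)\<^sup>2) = (2 * (A + B) * d)\<^sup>2"
proof -
  define S where "S = A + B"
  have diff: "(A - B) * S = 2 * r * a"
    using assms by (simp add: S_def algebra_simps power2_eq_square)
  have sum: "(A - B)\<^sup>2 = (2 * a)\<^sup>2 + r\<^sup>2 + 4 * d\<^sup>2 - S\<^sup>2"
    using assms by (simp add: S_def algebra_simps power2_eq_square)
  have "(2 * r * a)\<^sup>2 = S\<^sup>2 * ((2 * a)\<^sup>2 + r\<^sup>2 + 4 * d\<^sup>2 - S\<^sup>2)"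
    unfolding diff[symmetric] sum[symmetric] by (simp add: power_mult_distrib)
  then show ?thesis
    unfolding S_def[symmetric] by (simp add: algebra_simps power2_eq_square)
qed

lemma sqrt_ell_rho_times_sin_ell_theta:
  "sqrt ((ell_rho r y)\<^sup>2 - r\<^sup>2) * sin (ell_theta r y) = 2 * axis_dist y"
proof (cases "ell_rho r y = 0")
  case True
  then have "r = 0" "axis_dist y = 0"
    using ell_rho_lower_bounds[where r = r and y = y] axis_dist_nonneg[of y] by auto
  with True show ?thesis by simp
next
  case False
  define \<rho> where "\<rho> = ell_rho r y"
  define c where "c = 2 * y$1 / \<rho>"
  have "\<rho> > 0" "\<bar>2 * y$1\<bar> \<le> \<rho>"
    using False ell_rho_lower_bounds[where r = r and y = y] by (auto simp: \<rho>_def)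
  then have c: "\<bar>c\<bar> \<le> 1" "1 - c\<^sup>2 = (\<rho>\<^sup>2 - (2 * y$1)\<^sup>2) / \<rho>\<^sup>2"
    by (simp_all add: c_def abs_divide power_divide field_simps)
  have "(\<rho>\<^sup>2 - r\<^sup>2) * (\<rho>\<^sup>2 - (2 * y$1)\<^sup>2) = (2 * \<rho> * axis_dist y)\<^sup>2"
    unfolding \<rho>_def ell_rho_def
    by (rule confocal_identity[OF dist_focus_x_power2 dist_focus_z_power2])
  with \<open>\<rho> > 0\<close> have radial: "(\<rho>\<^sup>2 - r\<^sup>2) * (1 - c\<^sup>2) = (2 * axis_dist y)\<^sup>2"
    unfolding c(2) by (simp add: field_simps power_mult_distrib)
  have sin: "sin (ell_theta r y) = sqrt (1 - c\<^sup>2)"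
    unfolding ell_theta_def c_def[unfolded \<rho>_def, symmetric] using c(1) by (rule sin_arccos_abs)
  have "sqrt (\<rho>\<^sup>2 - r\<^sup>2) * sin (ell_theta r y) = sqrt ((2 * axis_dist y)\<^sup>2)"
    by (simp only: sin radial[symmetric] real_sqrt_mult)
  then show ?thesis
    by (simp only: \<rho>_def real_sqrt_abs abs_of_nonneg axis_dist_nonneg mult_nonneg_nonneg zero_le_numeral)
qed

lemma inverse_axis_dist_le_nn_integral:
  assumes pos: "axis_dist y > 0"
  shows "ennreal (1 / axis_dist y)
    \<le> (\<integral>\<^sup>+ t \<in> {y$1 - axis_dist y .. y$1 + axis_dist y}. ennreal (1 / (norm (y - t *\<^sub>R axis 1 1))\<^sup>2) \<partial>lborel)"
proof -
  define d where "d = axis_dist y"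
  have "ennreal (1 / d) = ennreal (1 / (2 * d\<^sup>2)) * ennreal (2 * d)"
    using pos by (simp add: d_def ennreal_mult[symmetric] power2_eq_square)
  also have "\<dots> = (\<integral>\<^sup>+ t \<in> {y$1 - d .. y$1 + d}. ennreal (1 / (2 * d\<^sup>2)) \<partial>lborel)"
    using pos by (simp add: d_def nn_integral_cmult_indicator mult.commute)
  also have "\<dots> \<le> (\<integral>\<^sup>+ t \<in> {y$1 - d .. y$1 + d}. ennreal (1 / (norm (y - t *\<^sub>R axis 1 1))\<^sup>2) \<partial>lborel)"
  proof (intro nn_integral_mono)
    fix t
    show "ennreal (1 / (2 * d\<^sup>2)) * indicator {y$1 - d .. y$1 + d} t
        \<le> ennreal (1 / (norm (y - t *\<^sub>R axis 1 1))\<^sup>2) * indicator {y$1 - d .. y$1 + d} t"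
    proof (cases "t \<in> {y$1 - d .. y$1 + d}")
      case True
      then have "\<bar>y$1 - t\<bar> \<le> d"
        by auto
      then have "(y$1 - t)\<^sup>2 \<le> d\<^sup>2"
        using power_mono[of "\<bar>y$1 - t\<bar>" d 2] by simp
      then have "0 < (norm (y - t *\<^sub>R axis 1 1))\<^sup>2" "(norm (y - t *\<^sub>R axis 1 1))\<^sup>2 \<le> 2 * d\<^sup>2"
        using pos unfolding norm_diff_axis_power2 d_def by (auto intro: add_nonneg_pos)
      with True show ?thesis
        by (simp add: ennreal_leI frac_le)
    qed simp
  qed
  finally show ?thesis
    unfolding d_def .
qed

lemma nn_integral_potential_family_le_K2_norm:
  fixes f :: "real^3 \<Rightarrow> real" and \<gamma> :: "real \<Rightarrow> real^3"
  assumes [measurable]: "f \<in> borel_measurable lborel" "\<gamma> \<in> borel_measurable lborel" "T \<in> sets lborel"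
  shows "(\<integral>\<^sup>+ y. (\<integral>\<^sup>+ t \<in> T. ennreal (\<bar>f y\<bar> / (norm (y - \<gamma> t))\<^sup>2) \<partial>lborel) \<partial>lborel)
    \<le> emeasure lborel T * K2_norm f"
proof -
  have "(\<integral>\<^sup>+ y. (\<integral>\<^sup>+ t \<in> T. ennreal (\<bar>f y\<bar> / (norm (y - \<gamma> t))\<^sup>2) \<partial>lborel) \<partial>lborel)
      = (\<integral>\<^sup>+ t. (\<integral>\<^sup>+ y. ennreal (\<bar>f y\<bar> / (norm (y - \<gamma> t))\<^sup>2) * indicator T t \<partial>lborel) \<partial>lborel)"
    by (rule lborel_pair.Fubini'[symmetric]) measurable
  also have "\<dots> \<le> (\<integral>\<^sup>+ t. K2_norm f * indicator T t \<partial>lborel)"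
  proof (intro nn_integral_mono)
    fix t
    have "(\<integral>\<^sup>+ y. ennreal (\<bar>f y\<bar> / (norm (y - \<gamma> t))\<^sup>2) \<partial>lborel) \<le> K2_norm f"
      unfolding K2_norm_def by (rule SUP_upper) simp
    then show "(\<integral>\<^sup>+ y. ennreal (\<bar>f y\<bar> / (norm (y - \<gamma> t))\<^sup>2) * indicator T t \<partial>lborel)
        \<le> K2_norm f * indicator T t"
      by (simp split: split_indicator)
  qed
  also have "\<dots> = K2_norm f * emeasure lborel T"
    by (rule nn_integral_cmult_indicator[OF assms(3)])
  finally show ?thesis
    by (simp add: mult.commute)
qed

lemma ell_integrand_le_nn_integral_axis:
  fixes a r :: real and y :: "real^3"
  assumes r: "r > 0" and \<rho>: "ell_rho r y \<le> 2 * r" and a: "0 \<le> a"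
  shows "ennreal (a / (r * sqrt ((ell_rho r y)\<^sup>2 - r\<^sup>2) * sin (ell_theta r y)))
    \<le> ennreal (1 / (2 * r)) * (\<integral>\<^sup>+ t \<in> {-2*r..2*r}. ennreal (a / (norm (y - t *\<^sub>R axis 1 1))\<^sup>2) \<partial>lborel)"
proof -
  define d where "d = axis_dist y"
  have denom: "r * sqrt ((ell_rho r y)\<^sup>2 - r\<^sup>2) * sin (ell_theta r y) = 2 * r * d"
    using sqrt_ell_rho_times_sin_ell_theta[where r = r and y = y] by (simp add: d_def mult.assoc)
  show ?thesis
  proof (cases "d = 0")
    case True
    \<comment> \<open>On the axis the weight vanishes, and division by zero makes the integrand \<open>0\<close>.\<close>
    then show ?thesis
      by (simp add: denom)
  next
    case False
    then have "d > 0"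
      using axis_dist_nonneg[of y] by (simp add: d_def)
    have window: "{y$1 - d .. y$1 + d} \<subseteq> {-2*r..2*r}"
      using ell_rho_lower_bounds[where r = r and y = y] \<rho> by (auto simp: d_def)
    have "ennreal (a / (r * sqrt ((ell_rho r y)\<^sup>2 - r\<^sup>2) * sin (ell_theta r y)))
        = ennreal (1 / (2 * r)) * ennreal a * ennreal (1 / d)"
      using r a \<open>d > 0\<close> by (simp add: denom ennreal_mult[symmetric])
    also have "\<dots> \<le> ennreal (1 / (2 * r)) * ennreal a
        * (\<integral>\<^sup>+ t \<in> {y$1 - d .. y$1 + d}. ennreal (1 / (norm (y - t *\<^sub>R axis 1 1))\<^sup>2) \<partial>lborel)"
      using inverse_axis_dist_le_nn_integral \<open>d > 0\<close> by (intro mult_left_mono) (simp_all add: d_def)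
    also have "\<dots> \<le> ennreal (1 / (2 * r)) * ennreal a
        * (\<integral>\<^sup>+ t \<in> {-2*r..2*r}. ennreal (1 / (norm (y - t *\<^sub>R axis 1 1))\<^sup>2) \<partial>lborel)"
      by (intro mult_left_mono nn_set_integral_set_mono window) simp_all
    also have "\<dots> = ennreal (1 / (2 * r))
        * (\<integral>\<^sup>+ t \<in> {-2*r..2*r}. ennreal (a / (norm (y - t *\<^sub>R axis 1 1))\<^sup>2) \<partial>lborel)"
    proof -
      have "ennreal a * (\<integral>\<^sup>+ t \<in> {-2*r..2*r}. ennreal (1 / (norm (y - t *\<^sub>R axis 1 1))\<^sup>2) \<partial>lborel)
          = (\<integral>\<^sup>+ t \<in> {-2*r..2*r}. ennreal (a / (norm (y - t *\<^sub>R axis 1 1))\<^sup>2) \<partial>lborel)"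
        using a by (subst nn_integral_cmult[symmetric])
          (auto intro!: nn_integral_cong split: split_indicator simp: ennreal_mult'[symmetric])
      then show ?thesis
        by (simp only: mult.assoc)
    qed
    finally show ?thesis .
  qed
qed

theorem lemma5:
  shows "\<exists>C::real. \<forall>r::real. \<forall>f \<in> K2. r > 0 \<longrightarrow>
    (\<integral>\<^sup>+ y \<in> {y. ell_rho r y \<le> 2 * r}.
        ennreal (\<bar>f y\<bar> / (r * sqrt ((ell_rho r y)\<^sup>2 - r\<^sup>2) * sin (ell_theta r y))) \<partial>lborel)
      \<le> ennreal C * K2_norm f"
proof (intro exI[of _ 2] allI ballI impI)
  fix r :: real and f :: "real^3 \<Rightarrow> real"
  assume "f \<in> K2" and r: "r > 0"
  then have [measurable]: "f \<in> borel_measurable lborel"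
    by (simp add: K2_def)
  let ?potential = "\<lambda>y. \<integral>\<^sup>+ t \<in> {-2*r..2*r}. ennreal (\<bar>f y\<bar> / (norm (y - t *\<^sub>R axis 1 1))\<^sup>2) \<partial>lborel"
  have "(\<integral>\<^sup>+ y \<in> {y. ell_rho r y \<le> 2 * r}.
        ennreal (\<bar>f y\<bar> / (r * sqrt ((ell_rho r y)\<^sup>2 - r\<^sup>2) * sin (ell_theta r y))) \<partial>lborel)
      \<le> (\<integral>\<^sup>+ y. ennreal (1 / (2 * r)) * ?potential y \<partial>lborel)"
    using ell_integrand_le_nn_integral_axis[OF r] by (intro nn_integral_mono) (simp split: split_indicator)
  also have "\<dots> = ennreal (1 / (2 * r)) * (\<integral>\<^sup>+ y. ?potential y \<partial>lborel)"
    by (rule nn_integral_cmult) measurable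
  also have "\<dots> \<le> ennreal (1 / (2 * r)) * (emeasure lborel {-2*r..2*r} * K2_norm f)"
    by (intro mult_left_mono nn_integral_potential_family_le_K2_norm) simp_all
  also have "\<dots> = ennreal 2 * K2_norm f"
    using r by (simp add: mult.assoc[symmetric] ennreal_mult[symmetric])
  finally show "(\<integral>\<^sup>+ y \<in> {y. ell_rho r y \<le> 2 * r}.
        ennreal (\<bar>f y\<bar> / (r * sqrt ((ell_rho r y)\<^sup>2 - r\<^sup>2) * sin (ell_theta r y))) \<partial>lborel)
      \<le> ennreal 2 * K2_norm f" .
qed

end
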